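(* Let $X=(x_{ij})\in\mathbb{R}^{n\times p}$ with columns $X_1,\dots,X_p$, and let $A$ be a symmetric $n\times n$ $0/1$ matrix (the adjacency matrix of a network on the $n$ rows). For a $p\times p$ matrix $B=(\beta_{kj})$ with columns $\beta_j$, a diagonal matrix $\Omega=\mathrm{diag}(\omega_1^2,\dots,\omega_p^2)$ with $\omega_j>0$, and an $n\times n$ positive definite matrix $\Theta$, define $$S=\frac1p\sum_{j=1}^p\frac{1}{\omega_j^2}(X_j-X\beta_j)(X_j-X\beta_j)^\top,\qquad L(B,\Omega,\Theta\mid X)=-n\log\det D-p\log\det\Theta+\mathrm{Tr}(\Theta S),$$ where $D=\Omega^{-1}=\mathrm{diag}(1/\omega_1^2,\dots,1/\omega_p^2)$. For a DAG $G$ on nodes $\{1,\dots,p\}$, let $(\widehat B(G),\widehat\Omega(G),\widehat\Theta(G))$ denote a minimizer of $L(B,\Omega,\Theta\mid X)$ over all $B$ with $\beta_{kj}=0$ whenever $k\to j$ is not an edge of $G$, all such positive diagonal $\Omega$, and all positive definite $\Theta$ satisfying $\Theta_{ij}=0$ whenever $i\neq j$ and $A_{ij}=0$, and $\mathrm{diag}(\Theta^{-1})=1$ (the maximum likelihood estimate given $G$). Suppose $G_1$ and $G_2$ are two Markov equivalent DAGs on the same $p$ nodes and that the maximum likelihood estimates $(\widehat B(G_m),\widehat\Omega(G_m),\widehat\Theta(G_m))$, $m=1,2$, exist for $X$. Then $$L(\widehat B(G_1),\widehat\Omega(G_1),\widehat\Theta(G_1)\mid X)=L(\widehat B(G_2),\widehat\Omega(G_2),\widehat\Theta(G_2)\mid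 X).$$
   Context: This $L$ is the negative log-likelihood (as defined in the paper) of the model in which $X_j=\sum_{k}\beta_{kj}X_k+\varepsilon_j$ with independent $\varepsilon_j\sim\mathcal{N}_n(0,\omega_j^2\Sigma)$, $\Theta=\Sigma^{-1}$, $\mathrm{diag}(\Sigma)=1$. Two DAGs are Markov equivalent if they encode the same set of conditional independence relations (equivalently, they have the same skeleton and the same v-structures). *)

theory Defs
  imports "HOL-Analysis.Analysis"
begin

text \<open>Matrices are indexed by finite types: rows of the data matrix X by 'n
 (so n = CARD('n)), nodes / columns by 'p (so p = CARD('p)).
 For M :: real^'c^'r, M$i$j is the (i,j) entry.\<close>

definition pos_def :: "real^'n^'n \<Rightarrow> bool" where
  "pos_def M \<longleftrightarrow> transpose M = M \<and> (\<forall>x. x \<noteq> 0 \<longrightarrow> x \<bullet> (M *v x) > 0)"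

definition pos_diag :: "real^'p^'p \<Rightarrow> bool" where
  "pos_diag Om \<longleftrightarrow> (\<forall>i j. i \<noteq> j \<longrightarrow> Om$i$j = 0) \<and> (\<forall>j. Om$j$j > 0)"

definition S_mat :: "real^'p^'n \<Rightarrow> real^'p^'p \<Rightarrow> real^'p^'p \<Rightarrow> real^'n^'n" where
  "S_mat X B Om = (\<chi> a b. (1 / real CARD('p)) *
     (\<Sum>j\<in>UNIV. (1 / Om$j$j) *
        ((column j X - X *v column j B)$a) * ((column j X - X *v column j B)$b)))"

definition negloglik :: "real^'p^'n \<Rightarrow> real^'p^'p \<Rightarrow> real^'p^'p \<Rightarrow> real^'n^'n \<Rightarrow> real" where
  "negloglik X B Om Th =
     - real CARD('n) * ln (det (matrix_inv Om))
     - real CARD('p) * ln (det Th)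
     + trace (Th ** S_mat X B Om)"

definition is_dag :: "('p \<times> 'p) set \<Rightarrow> bool" where
  "is_dag E \<longleftrightarrow> acyclic E"

definition skeleton :: "('p \<times> 'p) set \<Rightarrow> ('p \<times> 'p) set" where
  "skeleton E = {(a,b). (a,b) \<in> E \<or> (b,a) \<in> E}"

definition v_structures :: "('p \<times> 'p) set \<Rightarrow> ('p \<times> 'p \<times> 'p) set" where
  "v_structures E = {(a,c,b). (a,c) \<in> E \<and> (b,c) \<in> E \<and> a \<noteq> b \<and> (a,b) \<notin> E \<and> (b,a) \<notin> E}"

definition markov_equiv :: "('p \<times> 'p) set \<Rightarrow> ('p \<times> 'p) set \<Rightarrow> bool" where
  "markov_equiv E1 E2 \<longleftrightarrow> skeleton E1 = skeleton E2 \<and> v_structures E1 = v_structures E2"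

definition feasible :: "real^'n^'n \<Rightarrow> ('p \<times> 'p) set \<Rightarrow> real^'p^'p \<Rightarrow> real^'p^'p \<Rightarrow> real^'n^'n \<Rightarrow> bool" where
  "feasible A E B Om Th \<longleftrightarrow>
     (\<forall>k j. (k,j) \<notin> E \<longrightarrow> B$k$j = 0) \<and>
     pos_diag Om \<and>
     pos_def Th \<and>
     (\<forall>i j. i \<noteq> j \<and> A$i$j = 0 \<longrightarrow> Th$i$j = 0) \<and>
     (\<forall>i. (matrix_inv Th)$i$i = 1)"

definition is_mle :: "real^'p^'n \<Rightarrow> real^'n^'n \<Rightarrow> ('p \<times> 'p) set \<Rightarrow> real^'p^'p \<Rightarrow> real^'p^'p \<Rightarrow> real^'n^'n \<Rightarrow> bool" where
  "is_mle X A E B Om Th \<longleftrightarrow> feasible A E B Om Th \<and>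
     (\<forall>B' Om' Th'. feasible A E B' Om' Th' \<longrightarrow> negloglik X B Om Th \<le> negloglik X B' Om' Th')"

end

(* Markov equivalent DAGs are connected by a sequence of covered edge reversals that stays
   inside the equivalence class (Chickering 1995). Reversing a covered edge x -> y does not
   change the set of attainable values of L: keeping Theta fixed, replace the residual of y by
   r_y + c r_x and that of x by the residual of regressing r_x on it, with the corresponding
   variances. The product of the variances and the weighted sum of quadratic forms Tr(Theta S)
   are unchanged, so every value of L attained for one DAG is attained for the other, and the
   minima agree. *)

theory Submission
  imports Defs
begin

definition covered_edge :: "('a \<times> 'a) set \<Rightarrow> 'a \<Rightarrow> 'a \<Rightarrow> bool" where
  "covered_edge G x y \<longleftrightarrow> (\<forall>z. (z, y) \<in> G \<longleftrightarrow> z = x \<or> (z, x) \<in> G)"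

definition reverse_edge :: "('a \<times> 'a) set \<Rightarrow> 'a \<Rightarrow> 'a \<Rightarrow> ('a \<times> 'a) set" where
  "reverse_edge G x y = insert (y, x) (G - {(x, y)})"

lemma covered_edgeD:
  assumes "covered_edge G x y"
  shows covered_edge_in: "(x, y) \<in> G"
    and covered_edge_parent_tail: "(z, x) \<in> G \<Longrightarrow> (z, y) \<in> G"
    and covered_edge_parent_head: "(z, y) \<in> G \<Longrightarrow> z \<noteq> x \<Longrightarrow> (z, x) \<in> G"
  using assms unfolding covered_edge_def by blast+

lemma acyclic_edge_facts:
  assumes "acyclic G"
  shows acyclic_irrefl: "(a, a) \<notin> G"
    and acyclic_asym: "(a, b) \<in> G \<Longrightarrow> (b, a) \<notin> G"
    and acyclic_no_triangle: "(a, b) \<in> G \<Longrightarrow> (b, c) \<in> G \<Longrightarrow> (c, a) \<notin> G"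
  using assms unfolding acyclic_def
  by (meson trancl.r_into_trancl trancl_into_trancl)+

lemma acyclic_reverse_covered_edge:
  assumes ac: "acyclic G" and cov: "covered_edge G x y"
  shows "acyclic (reverse_edge G x y)"
  unfolding acyclic_def
proof (intro allI notI)
  fix a
  define G0 where "G0 = G - {(x, y)}"
  assume "(a, a) \<in> (reverse_edge G x y)\<^sup>+"
  then have "(a, a) \<in> G0\<^sup>+ \<or> (x, y) \<in> G0\<^sup>*"
    unfolding reverse_edge_def G0_def[symmetric] trancl_insert by (auto intro: rtrancl_trans)
  moreover have "(a, a) \<notin> G0\<^sup>+"
    using ac trancl_mono[of _ G0 G] unfolding acyclic_def G0_def by blast
  moreover have "(x, y) \<notin> G0\<^sup>*"
  proof
    assume "(x, y) \<in> G0\<^sup>*"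
    moreover have "x \<noteq> y" using acyclic_irrefl[OF ac] covered_edge_in[OF cov] by blast
    ultimately obtain z where xz: "(x, z) \<in> G0\<^sup>*" and zy: "(z, y) \<in> G0"
      by (meson rtranclE)
    \<comment> \<open>the last step into y is not the edge x \<rightarrow> y, so it comes from a parent of x\<close>
    have "(z, x) \<in> G" using covered_edge_parent_head[OF cov] zy unfolding G0_def by blast
    moreover have "(x, z) \<in> G\<^sup>*" using xz rtrancl_mono[of G0 G] unfolding G0_def by blast
    ultimately show False using ac unfolding acyclic_def by (meson rtrancl_into_trancl1)
  qed
  ultimately show False by blast
qed

lemma skeleton_reverse_edge: "(x, y) \<in> G \<Longrightarrow> skeleton (reverse_edge G x y) = skeleton G"
  unfolding skeleton_def reverse_edge_def by auto

lemma v_structures_reverse_covered_edge: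
  assumes cov: "covered_edge G x y" and yx: "(y, x) \<notin> G"
  shows "v_structures (reverse_edge G x y) = v_structures G"
proof -
  have in_reverse: "(a, c) \<in> reverse_edge G x y \<longleftrightarrow> (a, c) = (y, x) \<or> (a, c) \<in> G \<and> (a, c) \<noteq> (x, y)"
    for a c unfolding reverse_edge_def by blast
  have adj: "(a, b) \<notin> reverse_edge G x y \<and> (b, a) \<notin> reverse_edge G x y \<longleftrightarrow> (a, b) \<notin> G \<and> (b, a) \<notin> G"
    for a b unfolding in_reverse using covered_edge_in[OF cov] by blast
  have parents: "(a, c) \<in> reverse_edge G x y \<and> (b, c) \<in> reverse_edge G x y \<longleftrightarrow> (a, c) \<in> G \<and> (b, c) \<in> G"
    if "(a, b) \<notin> G" "(b, a) \<notin> G" "a \<noteq> b" for a b c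
    using that covered_edgeD[OF cov] yx unfolding in_reverse by blast
  show ?thesis
    unfolding v_structures_def using parents adj by blast
qed

lemma markov_equiv_reverse_covered_edge:
  assumes ac: "acyclic G" and cov: "covered_edge G x y"
  shows "markov_equiv (reverse_edge G x y) G"
  using skeleton_reverse_edge[OF covered_edge_in[OF cov]]
    v_structures_reverse_covered_edge[OF cov acyclic_asym[OF ac covered_edge_in[OF cov]]]
  unfolding markov_equiv_def by simp

lemma covered_edge_if_extremal:
  assumes ac: "acyclic G" and ac': "acyclic G'" and eqv: "markov_equiv G G'"
    and xy: "(x, y) \<in> G" "(x, y) \<notin> G'"
    and above_y: "\<And>w v. (w, v) \<in> G \<Longrightarrow> (v, y) \<in> G\<^sup>+ \<Longrightarrow> (w, v) \<in> G'"
    and below_x: "\<And>z. (x, z) \<in> G\<^sup>+ \<Longrightarrow> (z, y) \<in> G \<Longrightarrow> (z, y) \<in> G'"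
  shows "covered_edge G x y"
proof -
  have adj: "(a, b) \<in> G \<or> (b, a) \<in> G \<longleftrightarrow> (a, b) \<in> G' \<or> (b, a) \<in> G'" for a b
    using eqv unfolding markov_equiv_def skeleton_def by (auto simp: set_eq_iff)
  have vs: "(a, c, b) \<in> v_structures G \<longleftrightarrow> (a, c, b) \<in> v_structures G'" for a b c
    using eqv unfolding markov_equiv_def by simp
  have yx': "(y, x) \<in> G'" using adj[of x y] xy by blast
  have "(z, y) \<in> G" if zx: "(z, x) \<in> G" for z
  proof (rule ccontr)
    assume nzy: "(z, y) \<notin> G"
    have "(y, z) \<notin> G" using acyclic_no_triangle[OF ac zx xy(1)] .
    moreover have "z \<noteq> y" using zx acyclic_asym[OF ac xy(1)] by blast
    moreover have "(z, x) \<in> G'" using above_y[OF zx] xy(1) by blast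
    ultimately have "(z, x, y) \<in> v_structures G'"
      unfolding v_structures_def using yx' adj[of z y] nzy by auto
    then have "(y, x) \<in> G" using vs unfolding v_structures_def by auto
    then show False using acyclic_asym[OF ac xy(1)] by blast
  qed
  moreover have "(z, x) \<in> G" if zy: "(z, y) \<in> G" and zx: "z \<noteq> x" for z
  proof (rule ccontr)
    assume nzx: "(z, x) \<notin> G"
    show False
    proof (cases "(x, z) \<in> G")
      case False
      then have "(x, y, z) \<in> v_structures G"
        unfolding v_structures_def using xy(1) zy zx nzx by auto
      then show False using vs xy(2) unfolding v_structures_def by auto
    next
      case True
      have "(z, y) \<in> G'" using below_x True zy by blast
      moreover have "(x, z) \<in> G'" using above_y[OF True] zy by blast
      ultimately show False using acyclic_no_triangle[OF ac'] yx' by blast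
    qed
  qed
  ultimately show ?thesis
    unfolding covered_edge_def using xy(1) by blast
qed

text \<open>Chickering's lemma: among the edges of G that G' reverses, take one whose head y is
  minimal and then whose tail x is maximal in the ancestral order of G.\<close>
lemma covered_edge_exists:
  fixes G G' :: "('a::finite \<times> 'a) set"
  assumes ac: "acyclic G" and ac': "acyclic G'" and eqv: "markov_equiv G G'"
    and ne: "\<not> G \<subseteq> G'"
  obtains x y where "covered_edge G x y" and "(x, y) \<notin> G'"
proof -
  have acT: "acyclic (G\<^sup>+)" using ac unfolding acyclic_def by simp
  have wf: "wf (G\<^sup>+)" and wf_conv: "wf ((G\<^sup>+)\<inverse>)"
    using finite_acyclic_wf[OF _ acT] finite_acyclic_wf_converse[OF _ acT] by simp_all
  obtain x0 y0 where "(x0, y0) \<in> G - G'" using ne by auto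
  then obtain y where "y \<in> {v. \<exists>w. (w, v) \<in> G - G'}"
    and ymin: "\<And>v. (v, y) \<in> G\<^sup>+ \<Longrightarrow> v \<notin> {v. \<exists>w. (w, v) \<in> G - G'}"
    using wfE_min[OF wf, of y0 "{v. \<exists>w. (w, v) \<in> G - G'}"] by blast
  then obtain x where "x \<in> {w. (w, y) \<in> G - G'}"
    and xmax: "\<And>z. (z, x) \<in> (G\<^sup>+)\<inverse> \<Longrightarrow> z \<notin> {w. (w, y) \<in> G - G'}"
    using wfE_min[OF wf_conv, of _ "{w. (w, y) \<in> G - G'}"] by blast
  then have xy: "(x, y) \<in> G" "(x, y) \<notin> G'" by auto
  have "covered_edge G x y"
  proof (rule covered_edge_if_extremal[OF ac ac' eqv xy])
    show "(w, v) \<in> G'" if "(w, v) \<in> G" "(v, y) \<in> G\<^sup>+" for w v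
      using ymin that by auto
    show "(z, y) \<in> G'" if "(x, z) \<in> G\<^sup>+" "(z, y) \<in> G" for z
      using xmax that by auto
  qed
  from that[OF this xy(2)] show thesis .
qed

lemma eq_if_subset_same_skeleton:
  assumes "G \<subseteq> G'" and "acyclic G'" and "skeleton G = skeleton G'"
  shows "G = G'"
proof
  show "G' \<subseteq> G"
  proof (rule subrelI)
    fix a b assume ab: "(a, b) \<in> G'"
    then have "(a, b) \<in> G \<or> (b, a) \<in> G"
      using assms(3) unfolding skeleton_def by blast
    then show "(a, b) \<in> G" using assms(1) ab acyclic_asym[OF assms(2)] by blast
  qed
qed (rule assms(1))

lemma markov_equiv_covered_reversal_induct:
  fixes G G' :: "('a::finite \<times> 'a) set"
  assumes "acyclic G" and "acyclic G'" and "markov_equiv G G'" and "P G"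
    and reverse: "\<And>H x y. acyclic H \<Longrightarrow> covered_edge H x y \<Longrightarrow> P H \<Longrightarrow> P (reverse_edge H x y)"
  shows "P G'"
  using assms(1-4)
proof (induction "card (G - G')" arbitrary: G rule: less_induct)
  case less
  show ?case
  proof (cases "G \<subseteq> G'")
    case True
    then have "G = G'"
      using eq_if_subset_same_skeleton less.prems(2,3) unfolding markov_equiv_def by blast
    then show ?thesis using less.prems(4) by simp
  next
    case False
    then obtain x y where cov: "covered_edge G x y" and xy': "(x, y) \<notin> G'"
      using covered_edge_exists less.prems(1-3) by blast
    have "(y, x) \<in> G'"
      using less.prems(3) covered_edge_in[OF cov] xy'
      unfolding markov_equiv_def skeleton_def by blast
    then have "reverse_edge G x y - G' = (G - G') - {(x, y)}"
      unfolding reverse_edge_def by blast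
    moreover have "card ((G - G') - {(x, y)}) < card (G - G')"
      by (rule card_Diff1_less) (simp_all add: covered_edge_in[OF cov] xy')
    ultimately have card: "card (reverse_edge G x y - G') < card (G - G')"
      by simp
    have "markov_equiv (reverse_edge G x y) G'"
      using markov_equiv_reverse_covered_edge[OF less.prems(1) cov] less.prems(3)
      unfolding markov_equiv_def by simp
    from less.hyps[OF card acyclic_reverse_covered_edge[OF less.prems(1) cov] less.prems(2) this
        reverse[OF less.prems(1) cov less.prems(4)]]
    show ?thesis .
  qed
qed

definition resid :: "real^'p^'n \<Rightarrow> real^'p^'p \<Rightarrow> 'p \<Rightarrow> real^'n" where
  "resid X B j = X *v (axis j 1 - column j B)"

definition quad_form :: "real^'n^'n \<Rightarrow> real^'n \<Rightarrow> real" where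
  "quad_form Th v = v \<bullet> (Th *v v)"

lemma trace_mult_S_mat:
  fixes X :: "real^'p^'n" and B Om :: "real^'p^'p" and Th :: "real^'n^'n"
  shows "trace (Th ** S_mat X B Om)
    = (\<Sum>j\<in>UNIV. quad_form Th (resid X B j) / Om$j$j) / real CARD('p)"
proof -
  have resid: "column j X - X *v column j B = resid X B j" for j
    unfolding resid_def by (simp add: matrix_vector_mult_diff_distrib matrix_vector_mult_basis)
  have "trace (Th ** S_mat X B Om)
      = (\<Sum>i\<in>UNIV. \<Sum>k\<in>UNIV. \<Sum>j\<in>UNIV. resid X B j $ i * (Th$i$k * resid X B j $ k) / Om$j$j)
        / real CARD('p)"
    unfolding trace_def matrix_matrix_mult_def S_mat_def resid
    by (simp add: sum_distrib_left sum_divide_distrib mult_ac)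
  also have "\<dots> = (\<Sum>j\<in>UNIV. \<Sum>i\<in>UNIV. \<Sum>k\<in>UNIV. resid X B j $ i * (Th$i$k * resid X B j $ k) / Om$j$j)
        / real CARD('p)"
    by (subst sum.swap, subst (2) sum.swap) (rule refl)
  also have "\<dots> = (\<Sum>j\<in>UNIV. quad_form Th (resid X B j) / Om$j$j) / real CARD('p)"
    unfolding quad_form_def inner_vec_def matrix_vector_mult_def
    by (simp add: sum_distrib_left sum_divide_distrib)
  finally show ?thesis .
qed

lemma det_matrix_inv_pos_diag:
  fixes Om :: "real^'p^'p"
  assumes "pos_diag Om"
  shows "det (matrix_inv Om) = 1 / (\<Prod>j\<in>UNIV. Om$j$j)"
proof -
  have det: "det Om = (\<Prod>j\<in>UNIV. Om$j$j)"
    using assms unfolding pos_diag_def by (intro det_diagonal) auto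
  moreover have "(\<Prod>j\<in>UNIV. Om$j$j) \<noteq> 0"
    using assms unfolding pos_diag_def by (simp add: less_imp_neq[symmetric])
  moreover have "Om ** matrix_inv Om = mat 1"
    using calculation invertible_det_nz[of Om] unfolding matrix_inv_def invertible_def
    by (metis (mono_tags, lifting) someI_ex)
  then have "det Om * det (matrix_inv Om) = 1" by (metis det_mul det_I)
  ultimately show ?thesis by (metis eq_divide_eq mult.commute)
qed

lemma negloglik_pos_diag:
  fixes X :: "real^'p^'n" and B Om :: "real^'p^'p" and Th :: "real^'n^'n"
  assumes "pos_diag Om"
  shows "negloglik X B Om Th = real CARD('n) * ln (\<Prod>j\<in>UNIV. Om$j$j) - real CARD('p) * ln (det Th)
     + (\<Sum>j\<in>UNIV. quad_form Th (resid X B j) / Om$j$j) / real CARD('p)"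
proof -
  have ln_inv: "ln (1 / (\<Prod>j\<in>UNIV. Om$j$j)) = - ln (\<Prod>j\<in>UNIV. Om$j$j)"
    by (metis inverse_eq_divide ln_inverse)
  show ?thesis
    unfolding negloglik_def trace_mult_S_mat det_matrix_inv_pos_diag[OF assms] ln_inv by simp
qed

lemma quad_form_add_scaleR:
  "quad_form Th (a *\<^sub>R u + b *\<^sub>R w)
    = a\<^sup>2 * quad_form Th u + a * b * (u \<bullet> (Th *v w) + w \<bullet> (Th *v u)) + b\<^sup>2 * quad_form Th w"
  unfolding quad_form_def
  by (simp add: algebra_simps inner_add_left inner_add_right power2_eq_square)

text \<open>If u and w are independent with variances ux and uy, then w + c u has variance V and the
  residual of regressing u on it has variance ux uy / V, which is why the weighted sum is kept.\<close>
lemma quad_form_regression_reparam: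
  fixes Th :: "real^'n^'n" and ux uy c :: real
  assumes "ux > 0" and "uy > 0"
  defines "V \<equiv> uy + c\<^sup>2 * ux"
  defines "c' \<equiv> c * ux / V"
  shows "quad_form Th (w + c *\<^sub>R u) / V + quad_form Th (u - c' *\<^sub>R (w + c *\<^sub>R u)) / (ux * uy / V)
    = quad_form Th u / ux + quad_form Th w / uy"
proof -
  define m where "m = u \<bullet> (Th *v w) + w \<bullet> (Th *v u)"
  have V: "V > 0" unfolding V_def using assms(1,2) by (simp add: add_pos_nonneg)
  have "u - c' *\<^sub>R (w + c *\<^sub>R u) = (1 - c' * c) *\<^sub>R u + (- c') *\<^sub>R w"
    by (simp add: algebra_simps)
  moreover have "1 - c' * c = uy / V"
    using V unfolding c'_def V_def by (simp add: field_simps power2_eq_square)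
  ultimately have resid_x: "u - c' *\<^sub>R (w + c *\<^sub>R u) = (uy / V) *\<^sub>R u + (- c') *\<^sub>R w"
    by simp
  have qx: "quad_form Th (u - c' *\<^sub>R (w + c *\<^sub>R u))
      = (uy / V)\<^sup>2 * quad_form Th u - (uy / V) * c' * m + c'\<^sup>2 * quad_form Th w"
    unfolding resid_x quad_form_add_scaleR m_def by simp
  have qy: "quad_form Th (w + c *\<^sub>R u) = c\<^sup>2 * quad_form Th u + c * m + quad_form Th w"
    using quad_form_add_scaleR[of Th c u 1 w] unfolding m_def by (simp add: add.commute)
  show ?thesis
    unfolding qx qy using V assms(1,2) unfolding c'_def V_def[symmetric]
    by (simp add: field_simps power2_eq_square) (simp add: V_def algebra_simps power2_eq_square)
qed

definition supported_on :: "('p \<times> 'p) set \<Rightarrow> real^'p^'p \<Rightarrow> bool" where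
  "supported_on E B \<longleftrightarrow> (\<forall>k j. (k, j) \<notin> E \<longrightarrow> B$k$j = 0)"

lemma sum_UNIV_eq_off_two:
  fixes f g :: "'a::finite \<Rightarrow> 'b::comm_monoid_add"
  assumes "x \<noteq> y" and "\<And>j. j \<noteq> x \<Longrightarrow> j \<noteq> y \<Longrightarrow> f j = g j" and "f x + f y = g x + g y"
  shows "sum f UNIV = sum g UNIV"
proof -
  have "sum f (UNIV - {x, y}) = sum g (UNIV - {x, y})"
    using assms(2) by (intro sum.cong) auto
  then show ?thesis
    using assms(1,3) sum.subset_diff[of "{x, y}" UNIV f] sum.subset_diff[of "{x, y}" UNIV g] by simp
qed

lemma prod_UNIV_eq_off_two:
  fixes f g :: "'a::finite \<Rightarrow> 'b::comm_monoid_mult"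
  assumes "x \<noteq> y" and "\<And>j. j \<noteq> x \<Longrightarrow> j \<noteq> y \<Longrightarrow> f j = g j" and "f x * f y = g x * g y"
  shows "prod f UNIV = prod g UNIV"
proof -
  have "prod f (UNIV - {x, y}) = prod g (UNIV - {x, y})"
    using assms(2) by (intro prod.cong) auto
  then show ?thesis
    using assms(1,3) prod.subset_diff[of "{x, y}" UNIV f] prod.subset_diff[of "{x, y}" UNIV g] by simp
qed

text \<open>wy and wx are the new columns of the identity minus the coefficients, so that the new
  residuals of y and x are r_y + c r_x and r_x - d (r_y + c r_x), with c the weight of x -> y.\<close>
definition reverse_coeffs :: "real^'p^'p \<Rightarrow> real \<Rightarrow> 'p \<Rightarrow> 'p \<Rightarrow> real^'p^'p" where
  "reverse_coeffs B d x y =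
    (let wy = (axis y 1 - column y B) + B$x$y *\<^sub>R (axis x 1 - column x B);
         wx = (axis x 1 - column x B) - d *\<^sub>R wy
     in \<chi> k j. if j = y then (axis y 1 - wy)$k else if j = x then (axis x 1 - wx)$k else B$k$j)"

lemma resid_reverse_coeffs:
  assumes "x \<noteq> y"
  shows resid_reverse_coeffs_head: "resid X (reverse_coeffs B d x y) y = resid X B y + B$x$y *\<^sub>R resid X B x"
    and resid_reverse_coeffs_tail:
      "resid X (reverse_coeffs B d x y) x = resid X B x - d *\<^sub>R resid X (reverse_coeffs B d x y) y"
    and resid_reverse_coeffs_other:
      "j \<noteq> x \<Longrightarrow> j \<noteq> y \<Longrightarrow> resid X (reverse_coeffs B d x y) j = resid X B j"
proof -
  define wy where "wy = (axis y 1 - column y B) + B$x$y *\<^sub>R (axis x 1 - column x B)"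
  define wx where "wx = (axis x 1 - column x B) - d *\<^sub>R wy"
  have B': "reverse_coeffs B d x y
      = (\<chi> k j. if j = y then (axis y 1 - wy)$k else if j = x then (axis x 1 - wx)$k else B$k$j)"
    unfolding reverse_coeffs_def Let_def wy_def wx_def ..
  have col_y: "axis y 1 - column y (reverse_coeffs B d x y) = wy"
    and col_x: "axis x 1 - column x (reverse_coeffs B d x y) = wx"
    and col_other: "j \<noteq> x \<Longrightarrow> j \<noteq> y \<Longrightarrow> column j (reverse_coeffs B d x y) = column j B"
    using assms unfolding B' column_def by (simp_all add: vec_eq_iff)
  show "resid X (reverse_coeffs B d x y) y = resid X B y + B$x$y *\<^sub>R resid X B x"
    unfolding resid_def col_y wy_def
    by (simp only: matrix_vector_right_distrib matrix_vector_mult_scaleR)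
  show "resid X (reverse_coeffs B d x y) x = resid X B x - d *\<^sub>R resid X (reverse_coeffs B d x y) y"
    unfolding resid_def col_x col_y wx_def
    by (simp only: matrix_vector_mult_diff_distrib matrix_vector_mult_scaleR)
  show "j \<noteq> x \<Longrightarrow> j \<noteq> y \<Longrightarrow> resid X (reverse_coeffs B d x y) j = resid X B j"
    unfolding resid_def using col_other by simp
qed

lemma supported_on_reverse_coeffs:
  assumes ac: "acyclic G" and cov: "covered_edge G x y" and B: "supported_on G B"
  shows "supported_on (reverse_edge G x y) (reverse_coeffs B d x y)"
  unfolding supported_on_def
proof (intro allI impI)
  fix k j assume kj: "(k, j) \<notin> reverse_edge G x y"
  have "x \<noteq> y" using acyclic_irrefl[OF ac] covered_edge_in[OF cov] by blast
  have B0: "B$k$j = 0" if "(k, j) \<notin> G" for k j using B that unfolding supported_on_def by blast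
  have Bxx: "B$x$x = 0" using B0 acyclic_irrefl[OF ac] by blast
  define wy where "wy = (axis y 1 - column y B) + B$x$y *\<^sub>R (axis x 1 - column x B)"
  define wx where "wx = (axis x 1 - column x B) - d *\<^sub>R wy"
  have B': "reverse_coeffs B d x y
      = (\<chi> k j. if j = y then (axis y 1 - wy)$k else if j = x then (axis x 1 - wx)$k else B$k$j)"
    unfolding reverse_coeffs_def Let_def wy_def wx_def ..
  have wy_k: "wy$k = 0" if "k \<noteq> y" "(k, x) \<notin> G"
  proof (cases "k = x")
    case False
    then have "(k, y) \<notin> G" using covered_edge_parent_head[OF cov] that(2) by blast
    then show ?thesis using that B0 False unfolding wy_def by (simp add: axis_def column_def)
  qed (use Bxx \<open>x \<noteq> y\<close> in \<open>simp add: wy_def axis_def column_def\<close>)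
  consider "j = y" | "j = x" | "j \<noteq> x" "j \<noteq> y" by blast
  then show "reverse_coeffs B d x y $ k $ j = 0"
  proof cases
    case 1
    show ?thesis
    proof (cases "k = x")
      case True
      then show ?thesis using 1 Bxx unfolding B' wy_def by (simp add: axis_def column_def)
    next
      case False
      then have "(k, y) \<notin> G" "(k, x) \<notin> G"
        using kj 1 covered_edge_parent_tail[OF cov] unfolding reverse_edge_def by blast+
      then show ?thesis using 1 B0 False unfolding B' wy_def by (simp add: axis_def column_def)
    qed
  next
    case 2
    then have "k \<noteq> y" "(k, x) \<notin> G" using kj \<open>x \<noteq> y\<close> unfolding reverse_edge_def by blast+
    then show ?thesis using 2 \<open>x \<noteq> y\<close> B0 wy_k unfolding B' wx_def by (simp add: axis_def column_def)
  next
    case 3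
    then show ?thesis using kj B0 unfolding B' reverse_edge_def by simp
  qed
qed

lemma negloglik_reverse_covered_edge:
  fixes X :: "real^'p^'n" and B Om :: "real^'p^'p" and Th :: "real^'n^'n"
  assumes ac: "acyclic G" and cov: "covered_edge G x y"
    and B: "supported_on G B" and Om: "pos_diag Om"
  obtains B' Om' where "supported_on (reverse_edge G x y) B'" and "pos_diag Om'"
    and "negloglik X B' Om' Th = negloglik X B Om Th"
proof -
  have "x \<noteq> y" using acyclic_irrefl[OF ac] covered_edge_in[OF cov] by blast
  define c where "c = B$x$y"
  define ux where "ux = Om$x$x"
  define uy where "uy = Om$y$y"
  define V where "V = uy + c\<^sup>2 * ux"
  define B' where "B' = reverse_coeffs B (c * ux / V) x y"
  define Om' where "Om' = (\<chi> i j. if i \<noteq> j then 0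
      else if i = y then V else if i = x then ux * uy / V else Om$i$i)"
  have ux: "ux > 0" and uy: "uy > 0" using Om unfolding pos_diag_def ux_def uy_def by auto
  then have V: "V > 0" unfolding V_def by (simp add: add_pos_nonneg)
  have Om'_diag: "Om'$x$x = ux * uy / V" "Om'$y$y = V"
    and Om'_other: "j \<noteq> x \<Longrightarrow> j \<noteq> y \<Longrightarrow> Om'$j$j = Om$j$j" for j
    using \<open>x \<noteq> y\<close> unfolding Om'_def by simp_all
  have "pos_diag Om'"
    using Om ux uy V unfolding pos_diag_def Om'_def by auto
  have "(\<Prod>j\<in>UNIV. Om'$j$j) = (\<Prod>j\<in>UNIV. Om$j$j)"
    using \<open>x \<noteq> y\<close> V Om'_other
    by (intro prod_UNIV_eq_off_two[of x y]) (simp_all add: Om'_diag ux_def uy_def)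
  moreover have "(\<Sum>j\<in>UNIV. quad_form Th (resid X B' j) / Om'$j$j)
      = (\<Sum>j\<in>UNIV. quad_form Th (resid X B j) / Om$j$j)"
  proof (rule sum_UNIV_eq_off_two[OF \<open>x \<noteq> y\<close>])
    show "quad_form Th (resid X B' j) / Om'$j$j = quad_form Th (resid X B j) / Om$j$j"
      if "j \<noteq> x" "j \<noteq> y" for j
      using that unfolding B'_def by (simp add: resid_reverse_coeffs_other[OF \<open>x \<noteq> y\<close>] Om'_other)
    show "quad_form Th (resid X B' x) / Om'$x$x + quad_form Th (resid X B' y) / Om'$y$y
        = quad_form Th (resid X B x) / Om$x$x + quad_form Th (resid X B y) / Om$y$y"
      using quad_form_regression_reparam[OF ux uy, of Th "resid X B y" c "resid X B x"]
      unfolding B'_def resid_reverse_coeffs_tail[OF \<open>x \<noteq> y\<close>] resid_reverse_coeffs_head[OF \<open>x \<noteq> y\<close>]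
        Om'_diag ux_def uy_def V_def c_def
      by (simp add: add.commute)
  qed
  ultimately have "negloglik X B' Om' Th = negloglik X B Om Th"
    unfolding negloglik_pos_diag[OF Om] negloglik_pos_diag[OF \<open>pos_diag Om'\<close>] by simp
  moreover have "supported_on (reverse_edge G x y) B'"
    unfolding B'_def using supported_on_reverse_coeffs[OF ac cov B] .
  ultimately show thesis using that \<open>pos_diag Om'\<close> by blast
qed

lemma negloglik_transfer_markov_equiv:
  fixes X :: "real^'p^'n" and B Om :: "real^'p^'p" and Th :: "real^'n^'n"
    and G G' :: "('p \<times> 'p) set"
  assumes "acyclic G" and "acyclic G'" and "markov_equiv G G'"
    and "supported_on G B" and "pos_diag Om"
  obtains B' Om' where "supported_on G' B'" and "pos_diag Om'"
    and "negloglik X B' Om' Th = negloglik X B Om Th"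
proof -
  have "\<exists>B' Om'. supported_on G' B' \<and> pos_diag Om' \<and> negloglik X B' Om' Th = negloglik X B Om Th"
  proof (rule markov_equiv_covered_reversal_induct[OF assms(1-3)])
    show "\<exists>B' Om'. supported_on G B' \<and> pos_diag Om' \<and> negloglik X B' Om' Th = negloglik X B Om Th"
      using assms(4,5) by blast
  next
    fix H x y
    assume "acyclic H" and "covered_edge H x y"
      and "\<exists>B' Om'. supported_on H B' \<and> pos_diag Om' \<and> negloglik X B' Om' Th = negloglik X B Om Th"
    then show "\<exists>B' Om'. supported_on (reverse_edge H x y) B' \<and> pos_diag Om'
        \<and> negloglik X B' Om' Th = negloglik X B Om Th"
      by (metis negloglik_reverse_covered_edge)
  qed
  then show thesis using that by blast
qed

lemma mle_le_feasible_of_markov_equiv: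
  fixes X :: "real^'p^'n" and A :: "real^'n^'n"
    and B1 Om1 B2 Om2 :: "real^'p^'p" and Th1 Th2 :: "real^'n^'n"
  assumes "acyclic G1" and "acyclic G2" and "markov_equiv G1 G2"
    and feasible: "feasible A G1 B1 Om1 Th1" and mle: "is_mle X A G2 B2 Om2 Th2"
  shows "negloglik X B2 Om2 Th2 \<le> negloglik X B1 Om1 Th1"
proof -
  have "supported_on G1 B1" and "pos_diag Om1"
    using feasible unfolding feasible_def supported_on_def by auto
  then obtain B' Om' where "supported_on G2 B'" "pos_diag Om'"
    and same: "negloglik X B' Om' Th1 = negloglik X B1 Om1 Th1"
    using negloglik_transfer_markov_equiv assms(1-3) by metis
  then have "feasible A G2 B' Om' Th1"
    using feasible unfolding feasible_def supported_on_def by auto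
  then show ?thesis
    using mle same unfolding is_mle_def by metis
qed

theorem theorem1:
  fixes X :: "real^'p^'n" and A :: "real^'n^'n"
    and G1 G2 :: "('p \<times> 'p) set"
    and B1 Om1 B2 Om2 :: "real^'p^'p" and Th1 Th2 :: "real^'n^'n"
  assumes "transpose A = A" and "\<forall>i j. A$i$j = 0 \<or> A$i$j = 1"
    and "is_dag G1" and "is_dag G2" and "markov_equiv G1 G2"
    and "is_mle X A G1 B1 Om1 Th1" and "is_mle X A G2 B2 Om2 Th2"
  shows "negloglik X B1 Om1 Th1 = negloglik X B2 Om2 Th2"
proof -
  have "acyclic G1" "acyclic G2" using assms(3,4) unfolding is_dag_def by auto
  moreover have "markov_equiv G2 G1" using assms(5) unfolding markov_equiv_def by simp
  moreover have "feasible A G1 B1 Om1 Th1" "feasible A G2 B2 Om2 Th2"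
    using assms(6,7) unfolding is_mle_def by auto
  ultimately show ?thesis
    using mle_le_feasible_of_markov_equiv assms(5-7) by (metis order_antisym)
qed

end
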